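(* Let $(\mathcal{L},\mathcal{D}(\mathcal{L}))$ be the generator of a $C_0$-contraction semigroup on a Banach space $\mathcal{X}$, $M\in\mathcal{B}(\mathcal{X})$ a contraction, and $P$ a projection with $\|M^n-P\|_\infty\le\delta^n$ for some $\delta\in(0,1)$ and all $n\in\mathbb{N}$. Assume there is $b\ge0$ such that $\|Pe^{t\mathcal{L}}(\mathbf{1}-P)\|_\infty\le tb$ and $\|(\mathbf{1}-P)e^{t\mathcal{L}}P\|_\infty\le tb$ for all $t\ge0$, and that $(P\mathcal{L}P,\mathcal{D}(\mathcal{L}P))$ is the generator of a $C_0$-semigroup. Then $e^{\tilde b}:=\sup_{s\in[0,1]}\|e^{sP\mathcal{L}P}P\|_\infty<\infty$ and for all $n\in\mathbb{N}$ and all $x\in\mathcal{D}((\mathcal{L}P)^2)$ $$\Big\|e^{nP(e^{\frac1n\mathcal{L}}-\mathbf{1})P}Px-e^{P\mathcal{L}P}Px\Big\|\le\frac{e^{\tilde b}}{2n}\big(b^2\|x\|+\|(\mathcal{L}P)^2x\|\big).$$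
   Context: $\mathcal{B}(\mathcal{X})$: bounded operators with operator norm $\|\cdot\|_\infty$; $\mathbf{1}$ the identity; contraction: norm at most $1$; projection: bounded idempotent. A $C_0$-(contraction) semigroup is a strongly continuous semigroup (of contractions), denoted $e^{t\mathcal{K}}$ by its generator $\mathcal{K}$; $e^{P\mathcal{L}P}$ means the semigroup generated by $(P\mathcal{L}P,\mathcal{D}(\mathcal{L}P))$ at time $1$. $e^{nP(e^{\frac1n\mathcal{L}}-\mathbf{1})P}$ is the exponential of a bounded operator. Domains: $\mathcal{D}(\mathcal{L}P)=\{x:Px\in\mathcal{D}(\mathcal{L})\}$, $\mathcal{D}((\mathcal{L}P)^2)=\{x\in\mathcal{D}(\mathcal{L}P):\mathcal{L}Px\in\mathcal{D}(\mathcal{L}P)\}$. *)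

theory Defs
  imports "HOL-Analysis.Analysis"
begin

definition bpow :: "('a::real_normed_vector \<Rightarrow>\<^sub>L 'a) \<Rightarrow> nat \<Rightarrow> ('a \<Rightarrow>\<^sub>L 'a)" where
  "bpow A n = ((\<lambda>B. A o\<^sub>L B) ^^ n) id_blinfun"

definition bexp :: "('a::banach \<Rightarrow>\<^sub>L 'a) \<Rightarrow> ('a \<Rightarrow>\<^sub>L 'a)" where
  "bexp A = (\<Sum>k. (1 / fact k) *\<^sub>R bpow A k)"

definition C0_semigroup :: "(real \<Rightarrow> ('a::real_normed_vector \<Rightarrow>\<^sub>L 'a)) \<Rightarrow> bool" where
  "C0_semigroup T \<longleftrightarrow>
     T 0 = id_blinfun \<and>
     (\<forall>s\<ge>0. \<forall>t\<ge>0. T (s + t) = T s o\<^sub>L T t) \<and>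
     (\<forall>x. continuous_on {0..} (\<lambda>t. T t x))"

definition C0_contraction_semigroup :: "(real \<Rightarrow> ('a::real_normed_vector \<Rightarrow>\<^sub>L 'a)) \<Rightarrow> bool" where
  "C0_contraction_semigroup T \<longleftrightarrow> C0_semigroup T \<and> (\<forall>t\<ge>0. norm (T t) \<le> 1)"

definition generator :: "(real \<Rightarrow> ('a::real_normed_vector \<Rightarrow>\<^sub>L 'a)) \<Rightarrow> ('a \<Rightarrow> 'a) \<Rightarrow> 'a set \<Rightarrow> bool" where
  "generator T L D \<longleftrightarrow>
     D = {x. \<exists>y. ((\<lambda>t. (1 / t) *\<^sub>R (T t x - x)) \<longlongrightarrow> y) (at_right 0)} \<and>
     (\<forall>x\<in>D. ((\<lambda>t. (1 / t) *\<^sub>R (T t x - x)) \<longlongrightarrow> L x) (at_right 0))"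

end

theory Submission
  imports Defs
begin

(* For h = 1/n let C = P T(h) P.  On the range of P, n P (T(h) - 1) P acts as n (C - 1), so its
   exponential is the Poisson average  sum_k e^-n n^k/k! C^k.  One step C w differs from S(h) w by
   at most b^2 h^2/2 |w|, since T leaks out of and back into the range of P only at rate b; hence
   C^k y is within k b^2 h^2/2 |y| of S(kh) y.  The Poisson average of S(kh) y is then compared
   with S(1) y by a second-order expansion around k = n: the linear term cancels because the
   Poisson mean is n, and the quadratic remainder has Poisson weight n and size h^2 |(PLP)^2 y|.
   The total error is n (b^2 h^2 |y| + h^2 |(PLP)^2 y|)/2 = (b^2 |y| + |(PLP)^2 y|)/(2n). *)

section \<open>Monotonicity from one-sided Dini derivatives\<close>

lemma le_slope_by_right_Dini:
  fixes \<phi> :: "real \<Rightarrow> real"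
  assumes ab: "a \<le> b" and cont: "continuous_on {a..b} \<phi>" and e: "e > 0"
    and right: "\<forall>t\<in>{a..<b}. \<forall>\<^sub>F s in at_right 0. \<phi> (t + s) \<le> \<phi> t + e * s"
  shows "\<phi> b \<le> \<phi> a + e * (b - a)"
proof -
  define F where "F = {a..b} \<inter> (\<lambda>u. \<phi> u - e * (u - a)) -` {..\<phi> a}"
  have "closed F"
    unfolding F_def
    by (intro continuous_closed_preimage continuous_intros cont closed_atLeastAtMost closed_atMost)
  moreover have "a \<in> F" "bdd_above F"
    using ab by (auto simp: F_def intro!: bdd_aboveI[of _ b])
  ultimately have c: "Sup F \<in> F"
    by (intro closed_contains_Sup) auto
  have "Sup F = b"
  proof (rule ccontr)
    assume "Sup F \<noteq> b"
    with c have "Sup F \<in> {a..<b}" by (auto simp: F_def)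
    moreover have "\<forall>\<^sub>F s in at_right 0. s < b - Sup F"
      using \<open>Sup F \<in> {a..<b}\<close>
      by (auto simp: eventually_at_right_field intro!: exI[of _ "b - Sup F"])
    ultimately have
        "\<forall>\<^sub>F s in at_right 0. \<phi> (Sup F + s) \<le> \<phi> (Sup F) + e * s \<and> 0 < s \<and> s < b - Sup F"
      using right eventually_at_right_less by (intro eventually_conj) auto
    then obtain s where s: "\<phi> (Sup F + s) \<le> \<phi> (Sup F) + e * s" "0 < s" "s < b - Sup F"
      using eventually_happens'[OF trivial_limit_at_right_real] by blast
    with c have "Sup F + s \<in> F" by (auto simp: F_def algebra_simps)
    then have "Sup F + s \<le> Sup F"
      using \<open>bdd_above F\<close> by (rule cSup_upper)
    with s show False by simp
  qed
  with c show ?thesis by (auto simp: F_def algebra_simps)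
qed

lemma le_by_right_Dini:
  fixes \<phi> :: "real \<Rightarrow> real"
  assumes ab: "a \<le> b" and cont: "continuous_on {a..b} \<phi>"
    and right: "\<And>t e. t \<in> {a..<b} \<Longrightarrow> e > 0 \<Longrightarrow>
      \<forall>\<^sub>F s in at_right 0. \<phi> (t + s) \<le> \<phi> t + e * s"
  shows "\<phi> b \<le> \<phi> a"
proof (cases "a = b")
  case False
  with ab have "b - a > 0"
    by simp
  show ?thesis
  proof (rule field_le_epsilon)
    fix e :: real
    assume "e > 0"
    with \<open>b - a > 0\<close> have "\<phi> b \<le> \<phi> a + e / (b - a) * (b - a)"
      by (intro le_slope_by_right_Dini[OF ab cont] ballI right) simp_all
    with \<open>b - a > 0\<close> show "\<phi> b \<le> \<phi> a + e"
      by simp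
  qed
qed simp

lemma norm_diff_le_by_right_Dini:
  fixes f :: "real \<Rightarrow> 'a::real_normed_vector" and g :: "real \<Rightarrow> real"
  assumes ab: "a \<le> b" and "continuous_on {a..b} f" "continuous_on {a..b} g"
    and right: "\<And>t e. t \<in> {a..<b} \<Longrightarrow> e > 0 \<Longrightarrow>
       \<forall>\<^sub>F s in at_right 0. norm (f (t + s) - f t) \<le> g (t + s) - g t + e * s"
  shows "norm (f b - f a) \<le> g b - g a"
proof -
  have "(\<lambda>t. norm (f t - f a) - (g t - g a)) b \<le> (\<lambda>t. norm (f t - f a) - (g t - g a)) a"
  proof (rule le_by_right_Dini[OF ab])
    show "continuous_on {a..b} (\<lambda>t. norm (f t - f a) - (g t - g a))"
      by (intro continuous_intros assms)
    fix t e :: real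
    assume "t \<in> {a..<b}" "e > 0"
    from right[OF this] show "\<forall>\<^sub>F s in at_right 0.
        norm (f (t + s) - f a) - (g (t + s) - g a) \<le> norm (f t - f a) - (g t - g a) + e * s"
    proof eventually_elim
      case (elim s)
      moreover have "norm (f (t + s) - f a) \<le> norm (f t - f a) + norm (f (t + s) - f t)"
        using norm_triangle_ineq[of "f t - f a" "f (t + s) - f t"] by simp
      ultimately show ?case by simp
    qed
  qed
  then show ?thesis by simp
qed

lemma norm_contraction_apply_le:
  fixes X :: "'a::real_normed_vector \<Rightarrow>\<^sub>L 'b::real_normed_vector"
  shows "norm X \<le> 1 \<Longrightarrow> norm (X z) \<le> norm z"
  using order_trans[OF norm_blinfun mult_left_le_one_le[of "norm z" "norm X"]] by simp

lemma C0_semigroup_zero: "C0_semigroup U \<Longrightarrow> U 0 z = z"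
  unfolding C0_semigroup_def by auto

lemma C0_semigroup_add: "C0_semigroup U \<Longrightarrow> s \<ge> 0 \<Longrightarrow> t \<ge> 0 \<Longrightarrow> U (s + t) z = U s (U t z)"
  unfolding C0_semigroup_def by auto

lemma C0_semigroup_commute: "C0_semigroup U \<Longrightarrow> s \<ge> 0 \<Longrightarrow> t \<ge> 0 \<Longrightarrow> U s (U t z) = U t (U s z)"
  by (metis C0_semigroup_add add.commute)

lemma C0_semigroup_continuous_on: "C0_semigroup U \<Longrightarrow> continuous_on {0..} (\<lambda>t. U t z)"
  unfolding C0_semigroup_def by auto

lemma C0_semigroup_integrable_on:
  "C0_semigroup (U :: real \<Rightarrow> 'a::banach \<Rightarrow>\<^sub>L 'a) \<Longrightarrow> (\<lambda>r. U r z) integrable_on {0..t}"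
  by (intro integrable_continuous_interval continuous_on_subset[OF C0_semigroup_continuous_on]) auto

lemma generator_tendsto:
  "generator U G Dom \<Longrightarrow> z \<in> Dom \<Longrightarrow> ((\<lambda>t. (1 / t) *\<^sub>R (U t z - z)) \<longlongrightarrow> G z) (at_right 0)"
  unfolding generator_def by auto

lemma generator_domainI:
  assumes g: "generator U G Dom" and lim: "((\<lambda>t. (1 / t) *\<^sub>R (U t z - z)) \<longlongrightarrow> y) (at_right 0)"
  shows "z \<in> Dom" "G z = y"
proof -
  show z: "z \<in> Dom"
    using g lim unfolding generator_def by auto
  show "G z = y"
    using tendsto_unique[OF _ generator_tendsto[OF g z] lim] by simp
qed

lemma generator_eventually_le:
  assumes g: "generator U G Dom" and z: "z \<in> Dom" and e: "e > 0"
  shows "\<forall>\<^sub>F s in at_right 0. norm (U s z - z - s *\<^sub>R G z) \<le> e * s"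
  using tendstoD[OF generator_tendsto[OF g z] e] eventually_at_right_less
proof eventually_elim
  case (elim s)
  have "U s z - z - s *\<^sub>R G z = s *\<^sub>R ((1 / s) *\<^sub>R (U s z - z) - G z)"
    using elim by (simp add: algebra_simps)
  then have "norm (U s z - z - s *\<^sub>R G z) = s * dist ((1 / s) *\<^sub>R (U s z - z)) (G z)"
    using elim by (simp add: dist_norm)
  with elim show ?case
    by (simp add: mult.commute)
qed

lemma generator_linear:
  assumes g: "generator U G Dom" and x: "x \<in> Dom" and y: "y \<in> Dom"
  shows "a *\<^sub>R x + c *\<^sub>R y \<in> Dom" "G (a *\<^sub>R x + c *\<^sub>R y) = a *\<^sub>R G x + c *\<^sub>R G y"
proof -
  have "((\<lambda>t. a *\<^sub>R ((1 / t) *\<^sub>R (U t x - x)) + c *\<^sub>R ((1 / t) *\<^sub>R (U t y - y)))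
      \<longlongrightarrow> a *\<^sub>R G x + c *\<^sub>R G y) (at_right 0)"
    by (intro tendsto_intros generator_tendsto[OF g x] generator_tendsto[OF g y])
  moreover have "(\<lambda>t. a *\<^sub>R ((1 / t) *\<^sub>R (U t x - x)) + c *\<^sub>R ((1 / t) *\<^sub>R (U t y - y))) =
      (\<lambda>t. (1 / t) *\<^sub>R (U t (a *\<^sub>R x + c *\<^sub>R y) - (a *\<^sub>R x + c *\<^sub>R y)))"
    by (auto simp: blinfun.add_right blinfun.scaleR_right algebra_simps)
  ultimately show "a *\<^sub>R x + c *\<^sub>R y \<in> Dom" "G (a *\<^sub>R x + c *\<^sub>R y) = a *\<^sub>R G x + c *\<^sub>R G y"
    using generator_domainI[OF g] by auto
qed

lemma generator_semigroup_invariant: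
  assumes U: "C0_semigroup U" and g: "generator U G Dom" and z: "z \<in> Dom" and t: "t \<ge> 0"
  shows "U t z \<in> Dom" "G (U t z) = U t (G z)"
proof -
  have "((\<lambda>s. U t ((1 / s) *\<^sub>R (U s z - z))) \<longlongrightarrow> U t (G z)) (at_right 0)"
    by (intro blinfun.tendsto[OF tendsto_const] generator_tendsto[OF g z])
  moreover have "U t ((1 / s) *\<^sub>R (U s z - z)) = (1 / s) *\<^sub>R (U s (U t z) - U t z)" if "s > 0" for s
    using C0_semigroup_commute[OF U _ t] that by (simp add: blinfun.scaleR_right blinfun.diff_right)
  ultimately have "((\<lambda>s. (1 / s) *\<^sub>R (U s (U t z) - U t z)) \<longlongrightarrow> U t (G z)) (at_right 0)"
    by (rule Lim_transform_eventually[OF _ eventually_mono[OF eventually_at_right_less]]) auto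
  then show "U t z \<in> Dom" "G (U t z) = U t (G z)"
    using generator_domainI[OF g] by auto
qed

lemma continuous_on_contraction_semigroup_apply:
  assumes U: "C0_semigroup U" and contr: "\<And>t. t \<ge> 0 \<Longrightarrow> norm (U t) \<le> 1"
    and \<phi>: "continuous_on I \<phi>" "\<And>r. r \<in> I \<Longrightarrow> \<phi> r \<ge> 0" and v: "continuous_on I v"
  shows "continuous_on I (\<lambda>r. U (\<phi> r) (v r))"
  unfolding continuous_on_def
proof
  fix r assume r: "r \<in> I"
  have "continuous_on I (\<lambda>r'. U (\<phi> r') (v r))"
    using \<phi> by (intro continuous_on_compose2[OF C0_semigroup_continuous_on[OF U]]) auto
  then have "((\<lambda>r'. U (\<phi> r') (v r)) \<longlongrightarrow> U (\<phi> r) (v r)) (at r within I)"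
    using r unfolding continuous_on_def by simp
  moreover have "((\<lambda>r'. U (\<phi> r') (v r' - v r)) \<longlongrightarrow> 0) (at r within I)"
  proof (rule Lim_null_comparison)
    have "norm (U (\<phi> r') z) \<le> norm z" if "r' \<in> I" for r' z
      using norm_contraction_apply_le[OF contr[OF \<phi>(2)[OF that]]] .
    then show "\<forall>\<^sub>F r' in at r within I. norm (U (\<phi> r') (v r' - v r)) \<le> norm (v r' - v r)"
      unfolding eventually_at_filter by (intro always_eventually) blast
    have "(v \<longlongrightarrow> v r) (at r within I)"
      using v r unfolding continuous_on_def by simp
    then show "((\<lambda>r'. norm (v r' - v r)) \<longlongrightarrow> 0) (at r within I)"
      by (intro tendsto_norm_zero LIM_zero)
  qed
  ultimately have
      "((\<lambda>r'. U (\<phi> r') (v r) + U (\<phi> r') (v r' - v r)) \<longlongrightarrow> U (\<phi> r) (v r) + 0) (at r within I)"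
    by (rule tendsto_add)
  then show "((\<lambda>r. U (\<phi> r) (v r)) \<longlongrightarrow> U (\<phi> r) (v r)) (at r within I)"
    by (simp add: blinfun.diff_right)
qed

lemma has_vector_derivative_right_quotient:
  fixes F :: "real \<Rightarrow> 'a::real_normed_vector"
  assumes "(F has_vector_derivative v) (at x within {x..b})" and "x < b"
  shows "((\<lambda>s. (1 / s) *\<^sub>R (F (x + s) - F x)) \<longlongrightarrow> v) (at_right 0)"
proof -
  have "(F has_vector_derivative v) (at_right x)"
    using assms by (simp add: at_within_Icc_at_right)
  then have "((\<lambda>y. (1 / norm (y - x)) *\<^sub>R (F y - (F x + (y - x) *\<^sub>R v))) \<longlongrightarrow> 0) (at_right x)"
    unfolding has_vector_derivative_def has_derivative_within by blast
  then have "((\<lambda>s. (1 / norm s) *\<^sub>R (F (x + s) - (F x + s *\<^sub>R v))) \<longlongrightarrow> 0) (at_right 0)"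
    by (subst (asm) filterlim_at_right_to_0) (simp add: add.commute)
  then have "((\<lambda>s. (1 / s) *\<^sub>R (F (x + s) - F x) - v) \<longlongrightarrow> 0) (at_right 0)"
    by (rule Lim_transform_eventually) (auto intro!: eventually_mono[OF eventually_at_right_less]
        simp: algebra_simps)
  then show ?thesis
    by (rule LIM_zero_cancel)
qed

lemma semigroup_integral_has_vector_derivative:
  fixes U :: "real \<Rightarrow> 'a::banach \<Rightarrow>\<^sub>L 'a"
  assumes U: "C0_semigroup U" and t: "t \<ge> 0"
  shows "((\<lambda>u. integral {0..u} (\<lambda>r. U r z)) has_vector_derivative U t z) (at t within {t..t + 1})"
proof -
  have "((\<lambda>u. integral {0..u} (\<lambda>r. U r z)) has_vector_derivative U t z) (at t within {0..t + 1})"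
    using t
    by (intro integral_has_vector_derivative continuous_on_subset[OF C0_semigroup_continuous_on[OF U]])
      auto
  then show ?thesis
    by (rule has_vector_derivative_within_subset) (use t in auto)
qed

lemma semigroup_average_tendsto:
  fixes U :: "real \<Rightarrow> 'a::banach \<Rightarrow>\<^sub>L 'a"
  assumes U: "C0_semigroup U"
  shows "((\<lambda>t. (1 / t) *\<^sub>R integral {0..t} (\<lambda>r. U r z)) \<longlongrightarrow> z) (at_right 0)"
  using has_vector_derivative_right_quotient[
      OF semigroup_integral_has_vector_derivative[OF U order_refl]]
  by (simp add: C0_semigroup_zero[OF U])

lemma semigroup_integral_in_domain:
  fixes U :: "real \<Rightarrow> 'a::banach \<Rightarrow>\<^sub>L 'a"
  assumes U: "C0_semigroup U" and g: "generator U G Dom" and \<tau>: "\<tau> > 0"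
  shows "integral {0..\<tau>} (\<lambda>r. U r z) \<in> Dom"
proof -
  define F where "F u = integral {0..u} (\<lambda>r. U r z)" for u
  have shift: "U s (F \<tau>) = F (\<tau> + s) - F s" if s: "s > 0" for s
  proof -
    have "U s (F \<tau>) = integral {0..\<tau>} (\<lambda>r. U s (U r z))"
      unfolding F_def
      by (rule integral_linear[symmetric, OF C0_semigroup_integrable_on[OF U]
            blinfun.bounded_linear_right, unfolded o_def])
    also have "\<dots> = integral {0..\<tau>} ((\<lambda>r. U r z) \<circ> (+) s)"
      using s by (intro integral_cong) (auto simp: C0_semigroup_add[OF U])
    also have "\<dots> = integral {s..\<tau> + s} (\<lambda>r. U r z)"
      by (simp add: integral_shift_Icc_real)
    also have "\<dots> = F (\<tau> + s) - F s"
      using s \<tau> Henstock_Kurzweil_Integration.integral_combine[of 0 s "\<tau> + s" "\<lambda>r. U r z"]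
      by (simp add: F_def C0_semigroup_integrable_on[OF U] algebra_simps)
    finally show ?thesis .
  qed
  have F0: "F 0 = 0"
    by (simp add: F_def)
  have "((\<lambda>s. (1 / s) *\<^sub>R (F (\<tau> + s) - F \<tau>) - (1 / s) *\<^sub>R (F (0 + s) - F 0))
      \<longlongrightarrow> U \<tau> z - U 0 z) (at_right 0)"
    unfolding F_def using \<tau>
    by (intro tendsto_diff
        has_vector_derivative_right_quotient[OF semigroup_integral_has_vector_derivative[OF U]]) auto
  then have "((\<lambda>s. (1 / s) *\<^sub>R (U s (F \<tau>) - F \<tau>)) \<longlongrightarrow> U \<tau> z - U 0 z) (at_right 0)"
    by (rule Lim_transform_eventually) (auto intro!: eventually_mono[OF eventually_at_right_less]
        simp: shift F0 algebra_simps)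
  then show ?thesis
    using generator_domainI(1)[OF g] by (simp add: F_def)
qed

lemma has_sum_suminf_of_summable_norm:
  fixes f :: "nat \<Rightarrow> 'a::banach"
  assumes "summable (\<lambda>k. norm (f k))"
  shows "(f has_sum (\<Sum>k. f k)) UNIV"
  by (rule norm_summable_imp_has_sum[OF assms summable_sums[OF summable_norm_cancel[OF assms]]])

lemma has_sum_scaleR_product:
  fixes a :: "nat \<Rightarrow> 'a::banach" and c :: "nat \<Rightarrow> real"
  assumes a: "summable (\<lambda>k. norm (a k))" and c: "summable (\<lambda>k. norm (c k))"
  shows "((\<lambda>(i, j). c j *\<^sub>R a i) has_sum ((\<Sum>k. c k) *\<^sub>R (\<Sum>k. a k))) (UNIV \<times> UNIV)"
proof -
  define f where "f = (\<lambda>(i, j). c j *\<^sub>R a i)"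
  have "(\<lambda>p. norm (f p)) summable_on UNIV \<times> UNIV"
  proof (rule summable_on_SigmaI)
    show "((\<lambda>j. norm (f (i, j))) has_sum ((\<Sum>k. norm (c k)) * norm (a i))) UNIV" for i
      using has_sum_cmult_left[OF has_sum_suminf_of_summable_norm[of "\<lambda>k. norm (c k)"],
          of "norm (a i)"] c
      by (simp add: f_def)
    have "((\<lambda>i. norm (a i)) has_sum (\<Sum>k. norm (a k))) UNIV"
      using has_sum_suminf_of_summable_norm[of "\<lambda>k. norm (a k)"] a by simp
    then show "(\<lambda>i. (\<Sum>k. norm (c k)) * norm (a i)) summable_on UNIV"
      by (rule has_sum_imp_summable[OF has_sum_cmult_right])
  qed simp
  then have f_summable: "f summable_on UNIV \<times> UNIV"
    by (rule abs_summable_summable)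
  have "(f has_sum ((\<Sum>k. c k) *\<^sub>R (\<Sum>k. a k))) (UNIV \<times> UNIV)"
  proof (rule has_sum_SigmaI)
    show "((\<lambda>j. f (i, j)) has_sum (\<Sum>k. c k) *\<^sub>R a i) UNIV" for i
      unfolding f_def case_prod_conv
      by (rule has_sum_bounded_linear[OF bounded_linear_scaleR_left
            has_sum_suminf_of_summable_norm[OF c]])
    show "((\<lambda>i. (\<Sum>k. c k) *\<^sub>R a i) has_sum (\<Sum>k. c k) *\<^sub>R (\<Sum>k. a k)) UNIV"
      by (rule has_sum_scaleR[OF has_sum_suminf_of_summable_norm[OF a]])
  qed (fact f_summable)
  then show ?thesis
    by (simp only: f_def)
qed

lemma Cauchy_product_sums_scaleR:
  fixes a :: "nat \<Rightarrow> 'a::banach" and c :: "nat \<Rightarrow> real"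
  assumes a: "summable (\<lambda>k. norm (a k))" and c: "summable (\<lambda>k. norm (c k))"
  shows "(\<lambda>k. \<Sum>i\<le>k. c (k - i) *\<^sub>R a i) sums ((\<Sum>k. c k) *\<^sub>R (\<Sum>k. a k))"
proof -
  define g where "g = (\<lambda>(i, j). (i + j, i :: nat))"
  have bij: "bij_betw g (UNIV \<times> UNIV) (SIGMA k:UNIV. {..k})"
    unfolding g_def by (rule bij_betw_byWitness[where f' = "\<lambda>(k, i). (i, k - i)"]) auto
  have comp: "(\<lambda>p. (\<lambda>(k, i). c (k - i) *\<^sub>R a i) (g p)) = (\<lambda>(i, j). c j *\<^sub>R a i)"
    by (auto simp: g_def)
  have "((\<lambda>(k, i). c (k - i) *\<^sub>R a i) has_sum ((\<Sum>k. c k) *\<^sub>R (\<Sum>k. a k))) (SIGMA k:UNIV. {..k})"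
    using has_sum_reindex_bij_betw[OF bij, of "\<lambda>(k, i). c (k - i) *\<^sub>R a i"]
      has_sum_scaleR_product[OF a c]
    unfolding comp by (rule iffD1)
  then have "((\<lambda>k. \<Sum>i\<le>k. c (k - i) *\<^sub>R a i) has_sum ((\<Sum>k. c k) *\<^sub>R (\<Sum>k. a k))) UNIV"
    by (rule has_sum_SigmaD) simp
  then show ?thesis
    by (rule has_sum_imp_sums)
qed

lemma bpow_0 [simp]: "bpow X 0 = id_blinfun"
  by (simp add: bpow_def)

lemma bpow_Suc: "bpow X (Suc k) = X o\<^sub>L bpow X k"
  by (simp add: bpow_def)

lemma norm_bpow_le: "norm (bpow X k) \<le> norm X ^ k"
proof (induction k)
  case 0
  then show ?case by (simp add: norm_blinfun_id_le)
next
  case (Suc k)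
  have "norm (bpow X (Suc k)) \<le> norm X * norm (bpow X k)"
    unfolding bpow_Suc by (rule norm_blinfun_compose)
  also have "\<dots> \<le> norm X * norm X ^ k"
    using Suc.IH by (simp add: mult_left_mono)
  finally show ?case by simp
qed

lemma norm_le_one_of_bpow_close:
  assumes M: "norm M \<le> 1" and \<delta>: "0 < \<delta>" "\<delta> < 1"
    and MP: "\<And>n::nat. n \<ge> 1 \<Longrightarrow> norm (bpow M n - P) \<le> \<delta> ^ n"
  shows "norm P \<le> 1"
proof (rule LIMSEQ_le_const)
  have "(\<lambda>n. \<delta> ^ n) \<longlonglongrightarrow> 0"
    by (rule LIMSEQ_power_zero) (use \<delta> in simp)
  from tendsto_add[OF tendsto_const this, of 1] show "(\<lambda>n. 1 + \<delta> ^ n) \<longlonglongrightarrow> 1"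
    by simp
  have "norm P \<le> 1 + \<delta> ^ n" if "n \<ge> 1" for n
  proof -
    have "norm (bpow M n) \<le> 1"
      using norm_bpow_le[of M n] M by (meson order_trans power_le_one norm_ge_zero)
    then show ?thesis
      using norm_triangle_sub[of P "bpow M n"] MP[OF that] by (simp add: norm_minus_commute)
  qed
  then show "\<exists>N. \<forall>n\<ge>N. norm P \<le> 1 + \<delta> ^ n"
    by blast
qed

lemma bpow_add_scaleR_id_apply:
  "bpow (X + c *\<^sub>R id_blinfun) k y = (\<Sum>j\<le>k. (real (k choose j) * c ^ (k - j)) *\<^sub>R bpow X j y)"
proof (induction k)
  case 0
  then show ?case by simp
next
  case (Suc k)
  define \<beta> where "\<beta> j = real (k choose j) * c ^ (k - j)" for j
  have shifted: "real (k choose Suc j) * c ^ (k - j) = c * \<beta> (Suc j)" if "j \<le> k" for j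
  proof (cases "j = k")
    case False
    with that have "k - j = Suc (k - Suc j)" by simp
    then show ?thesis by (simp add: \<beta>_def)
  qed (simp add: \<beta>_def)
  have "bpow (X + c *\<^sub>R id_blinfun) (Suc k) y =
      (\<Sum>j\<le>k. \<beta> j *\<^sub>R bpow X (Suc j) y) + c *\<^sub>R (\<Sum>j\<le>k. \<beta> j *\<^sub>R bpow X j y)"
    by (simp add: bpow_Suc Suc.IH \<beta>_def blinfun.add_left blinfun.sum_right blinfun.scaleR_right
        blinfun.scaleR_left scaleR_sum_right sum.distrib algebra_simps)
  also have "c *\<^sub>R (\<Sum>j\<le>k. \<beta> j *\<^sub>R bpow X j y) = c *\<^sub>R (\<Sum>j\<le>Suc k. \<beta> j *\<^sub>R bpow X j y)"
    by (simp add: \<beta>_def)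
  also have "\<dots> = (c * \<beta> 0) *\<^sub>R y + (\<Sum>j\<le>k. (c * \<beta> (Suc j)) *\<^sub>R bpow X (Suc j) y)"
    unfolding scaleR_sum_right by (subst sum.atMost_Suc_shift) simp
  also have "(\<Sum>j\<le>k. (c * \<beta> (Suc j)) *\<^sub>R bpow X (Suc j) y) =
      (\<Sum>j\<le>k. (real (k choose Suc j) * c ^ (k - j)) *\<^sub>R bpow X (Suc j) y)"
    by (intro sum.cong) (simp_all add: shifted)
  finally show ?case
    unfolding sum.atMost_Suc_shift by (simp add: \<beta>_def sum.distrib algebra_simps)
qed

lemma summable_norm_bexp_series: "summable (\<lambda>k. norm ((1 / fact k) *\<^sub>R bpow X k y))"
proof (rule summable_comparison_test[OF _ summable_mult2[OF sums_summable[OF exp_converges]]])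
  have "norm ((1 / fact k) *\<^sub>R bpow X k y) \<le> norm X ^ k /\<^sub>R fact k * norm y" for k
  proof -
    have "norm (bpow X k y) \<le> norm X ^ k * norm y"
      using norm_blinfun[of "bpow X k" y] norm_bpow_le[of X k]
      by (meson mult_right_mono norm_ge_zero order_trans)
    then have "norm (bpow X k y) / fact k \<le> norm X ^ k * norm y / fact k"
      by (rule divide_right_mono) simp
    then show ?thesis
      by (simp add: field_simps)
  qed
  then show "\<exists>N. \<forall>k\<ge>N. norm (norm ((1 / fact k) *\<^sub>R bpow X k y)) \<le> norm X ^ k /\<^sub>R fact k * norm y"
    by simp
qed

lemma bexp_apply_sums: "(\<lambda>k. (1 / fact k) *\<^sub>R bpow X k y) sums bexp X y"
proof -
  have "summable (\<lambda>k. (1 / fact k) *\<^sub>R bpow X k)"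
  proof (rule summable_norm_cancel, rule summable_comparison_test)
    show "\<exists>N. \<forall>k\<ge>N. norm (norm ((1 / fact k) *\<^sub>R bpow X k)) \<le> norm X ^ k /\<^sub>R fact k"
      using norm_bpow_le[of X] by (auto simp: divide_simps)
  qed (rule sums_summable[OF exp_converges])
  then have "(\<lambda>k. (1 / fact k) *\<^sub>R bpow X k) sums bexp X"
    unfolding bexp_def by (rule summable_sums)
  from bounded_linear.sums[OF blinfun.bounded_linear_left this] show ?thesis
    by (simp add: blinfun.scaleR_left)
qed

lemma bexp_add_scaleR_id_apply: "bexp (X + c *\<^sub>R id_blinfun) y = exp c *\<^sub>R bexp X y"
proof -
  define a where "a i = (1 / fact i) *\<^sub>R bpow X i y" for i
  define d where "d m = c ^ m / fact m" for m
  have "(\<lambda>k. \<Sum>i\<le>k. d (k - i) *\<^sub>R a i) sums ((\<Sum>k. d k) *\<^sub>R (\<Sum>k. a k))"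
  proof (rule Cauchy_product_sums_scaleR)
    show "summable (\<lambda>k. norm (a k))"
      unfolding a_def by (rule summable_norm_bexp_series)
    show "summable (\<lambda>k. norm (d k))"
      using sums_summable[OF exp_converges[of "\<bar>c\<bar>"]]
      by (simp add: d_def abs_mult power_abs divide_inverse mult.commute)
  qed
  moreover have "(\<Sum>k. d k) = exp c" "(\<Sum>k. a k) = bexp X y"
    using exp_converges[of c] bexp_apply_sums[of X y]
    by (simp_all add: d_def a_def sums_iff divide_inverse mult.commute)
  moreover have "(\<Sum>i\<le>k. d (k - i) *\<^sub>R a i) = (1 / fact k) *\<^sub>R bpow (X + c *\<^sub>R id_blinfun) k y" for k
    unfolding bpow_add_scaleR_id_apply scaleR_sum_right
  proof (rule sum.cong)
    fix i assume "i \<in> {..k}"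
    then have "real (k choose i) = fact k / (fact i * fact (k - i))"
      by (simp add: binomial_fact)
    then show "d (k - i) *\<^sub>R a i = (1 / fact k) *\<^sub>R (real (k choose i) * c ^ (k - i)) *\<^sub>R bpow X i y"
      by (simp add: d_def a_def)
  qed simp
  ultimately have "(\<lambda>k. (1 / fact k) *\<^sub>R bpow (X + c *\<^sub>R id_blinfun) k y) sums (exp c *\<^sub>R bexp X y)"
    by simp
  then show ?thesis
    using bexp_apply_sums sums_unique2 by blast
qed

section \<open>Poisson averages\<close>

definition poisson :: "real \<Rightarrow> nat \<Rightarrow> real" where
  "poisson \<mu> k = exp (- \<mu>) * \<mu> ^ k / fact k"

lemma poisson_nonneg: "\<mu> \<ge> 0 \<Longrightarrow> poisson \<mu> k \<ge> 0"
  by (simp add: poisson_def)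

lemma poisson_Suc: "real (Suc k) * poisson \<mu> (Suc k) = \<mu> * poisson \<mu> k"
  by (simp add: poisson_def field_simps del: of_nat_Suc)

lemma poisson_sums: "poisson \<mu> sums 1"
proof -
  have "(\<lambda>k. exp (- \<mu>) * (\<mu> ^ k /\<^sub>R fact k)) sums (exp (- \<mu>) * exp \<mu>)"
    by (rule sums_mult[OF exp_converges])
  moreover have "(\<lambda>k. exp (- \<mu>) * (\<mu> ^ k /\<^sub>R fact k)) = poisson \<mu>"
    by (simp add: fun_eq_iff poisson_def divide_inverse mult_ac)
  ultimately show ?thesis
    by (simp add: exp_add[symmetric])
qed

lemma poisson_mean_sums: "(\<lambda>k. real k * poisson \<mu> k) sums \<mu>"
proof -
  have "(\<lambda>k. real (Suc k) * poisson \<mu> (Suc k)) sums \<mu>"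
    using sums_mult[OF poisson_sums, of \<mu>] by (simp only: poisson_Suc mult_1_right)
  then show ?thesis
    by (subst (asm) sums_Suc_iff) simp
qed

lemma poisson_factorial_moment_sums: "(\<lambda>k. real k * (real k - 1) * poisson \<mu> k) sums \<mu>\<^sup>2"
proof -
  have "real (Suc k) * (real (Suc k) - 1) * poisson \<mu> (Suc k) = \<mu> * (real k * poisson \<mu> k)" for k
  proof -
    have "real (Suc k) * (real (Suc k) - 1) * poisson \<mu> (Suc k)
        = real k * (real (Suc k) * poisson \<mu> (Suc k))"
      by (simp add: algebra_simps)
    then show ?thesis
      by (simp only: poisson_Suc mult.left_commute)
  qed
  then have "(\<lambda>k. real (Suc k) * (real (Suc k) - 1) * poisson \<mu> (Suc k)) sums \<mu>\<^sup>2"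
    using sums_mult[OF poisson_mean_sums, of \<mu>] by (simp only: power2_eq_square)
  then show ?thesis
    by (subst (asm) sums_Suc_iff) simp
qed

lemma poisson_centered_sums: "(\<lambda>k. (real k - \<mu>) * poisson \<mu> k) sums 0"
  using sums_diff[OF poisson_mean_sums[of \<mu>] sums_mult[OF poisson_sums[of \<mu>], of \<mu>]]
  by (simp add: left_diff_distrib)

lemma poisson_second_moment_sums: "(\<lambda>k. ((real k - \<mu>)\<^sup>2 - (real k - \<mu>)) * poisson \<mu> k) sums \<mu>"
proof -
  have "(\<lambda>k. real k * (real k - 1) * poisson \<mu> k - (2 * \<mu>) * (real k * poisson \<mu> k)
      + (\<mu>\<^sup>2 + \<mu>) * poisson \<mu> k) sums (\<mu>\<^sup>2 - (2 * \<mu>) * \<mu> + (\<mu>\<^sup>2 + \<mu>) * 1)"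
    by (intro sums_add sums_diff sums_mult poisson_sums poisson_mean_sums
        poisson_factorial_moment_sums)
  moreover have "(\<lambda>k. real k * (real k - 1) * poisson \<mu> k - (2 * \<mu>) * (real k * poisson \<mu> k)
      + (\<mu>\<^sup>2 + \<mu>) * poisson \<mu> k) = (\<lambda>k. ((real k - \<mu>)\<^sup>2 - (real k - \<mu>)) * poisson \<mu> k)"
    by (simp add: fun_eq_iff power2_eq_square algebra_simps)
  moreover have "\<mu>\<^sup>2 - (2 * \<mu>) * \<mu> + (\<mu>\<^sup>2 + \<mu>) * 1 = \<mu>"
    by (simp add: power2_eq_square)
  ultimately show ?thesis
    by (simp only:)
qed

lemma bexp_poisson:
  fixes Z :: "'a::banach \<Rightarrow>\<^sub>L 'a"
  assumes Z: "\<And>j. Z (x j) = \<mu> *\<^sub>R (x (Suc j) - x j)"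
  shows "(\<lambda>k. poisson \<mu> k *\<^sub>R x k) sums bexp Z (x 0)"
proof -
  \<comment> \<open>On \<open>x\<close>, \<open>Z + \<mu>\<close> acts as \<open>\<mu>\<close> times the shift, and \<open>exp Z = exp (-\<mu>) exp (Z + \<mu>)\<close>.\<close>
  define X where "X = Z + \<mu> *\<^sub>R id_blinfun"
  have pow: "bpow X k (x 0) = \<mu> ^ k *\<^sub>R x k" for k
    by (induction k) (simp_all add: bpow_Suc X_def Z blinfun.add_left blinfun.scaleR_left
        blinfun.scaleR_right algebra_simps)
  have "Z = X + (- \<mu>) *\<^sub>R id_blinfun"
    by (simp add: X_def)
  then have "bexp Z (x 0) = exp (- \<mu>) *\<^sub>R bexp X (x 0)"
    by (simp only: bexp_add_scaleR_id_apply)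
  with sums_scaleR_right[OF bexp_apply_sums, of "exp (- \<mu>)" X "x 0"] show ?thesis
    by (simp add: pow poisson_def)
qed

lemma norm_first_difference_shift_le:
  fixes a :: "nat \<Rightarrow> 'a::real_normed_vector"
  assumes dd: "\<And>j. norm (a (Suc (Suc j)) - 2 *\<^sub>R a (Suc j) + a j) \<le> q"
  shows "norm ((a (Suc (i + m)) - a (i + m)) - (a (Suc i) - a i)) \<le> real m * q"
proof (induction m)
  case (Suc m)
  have "(a (Suc (i + Suc m)) - a (i + Suc m)) - (a (Suc i) - a i) =
      ((a (Suc (i + m)) - a (i + m)) - (a (Suc i) - a i))
      + (a (Suc (Suc (i + m))) - 2 *\<^sub>R a (Suc (i + m)) + a (i + m))"
    by (simp add: algebra_simps scaleR_2)
  then have "norm ((a (Suc (i + Suc m)) - a (i + Suc m)) - (a (Suc i) - a i)) \<le>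
      norm ((a (Suc (i + m)) - a (i + m)) - (a (Suc i) - a i))
      + norm (a (Suc (Suc (i + m))) - 2 *\<^sub>R a (Suc (i + m)) + a (i + m))"
    by (metis norm_triangle_ineq)
  also have "\<dots> \<le> real m * q + q"
    using Suc.IH dd[of "i + m"] by linarith
  finally show ?case by (simp add: algebra_simps)
qed simp

lemma norm_forward_taylor_le:
  fixes a :: "nat \<Rightarrow> 'a::real_normed_vector"
  assumes dd: "\<And>j. norm (a (Suc (Suc j)) - 2 *\<^sub>R a (Suc j) + a j) \<le> q"
  shows "norm (a (n + m) - a n - real m *\<^sub>R (a (Suc n) - a n)) \<le> real m * (real m - 1) / 2 * q"
proof (induction m)
  case (Suc m)
  have "a (n + Suc m) - a n - real (Suc m) *\<^sub>R (a (Suc n) - a n) =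
      (a (n + m) - a n - real m *\<^sub>R (a (Suc n) - a n))
      + ((a (Suc (n + m)) - a (n + m)) - (a (Suc n) - a n))"
    by (simp add: algebra_simps)
  then have "norm (a (n + Suc m) - a n - real (Suc m) *\<^sub>R (a (Suc n) - a n)) \<le>
      norm (a (n + m) - a n - real m *\<^sub>R (a (Suc n) - a n))
      + norm ((a (Suc (n + m)) - a (n + m)) - (a (Suc n) - a n))"
    by (metis norm_triangle_ineq)
  also have "\<dots> \<le> real m * (real m - 1) / 2 * q + real m * q"
    using Suc.IH norm_first_difference_shift_le[of a q, OF dd, of n m] by linarith
  finally show ?case by (simp add: field_simps)
qed simp

lemma norm_backward_taylor_le:
  fixes a :: "nat \<Rightarrow> 'a::real_normed_vector"
  assumes dd: "\<And>j. norm (a (Suc (Suc j)) - 2 *\<^sub>R a (Suc j) + a j) \<le> q"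
  shows "m \<le> n \<Longrightarrow>
    norm (a (n - m) - a n + real m *\<^sub>R (a (Suc n) - a n)) \<le> real m * (real m + 1) / 2 * q"
proof (induction m)
  case (Suc m)
  define i where "i = n - Suc m"
  have n: "n = i + Suc m" "n - m = Suc i" "n - Suc m = i"
    using Suc.prems by (auto simp: i_def)
  have "a (n - Suc m) - a n + real (Suc m) *\<^sub>R (a (Suc n) - a n) =
      (a (n - m) - a n + real m *\<^sub>R (a (Suc n) - a n)) + ((a (Suc n) - a n) - (a (Suc i) - a i))"
    unfolding n(2,3) by (simp add: algebra_simps)
  then have "norm (a (n - Suc m) - a n + real (Suc m) *\<^sub>R (a (Suc n) - a n)) \<le>
      norm (a (n - m) - a n + real m *\<^sub>R (a (Suc n) - a n))
      + norm ((a (Suc n) - a n) - (a (Suc i) - a i))"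
    by (metis norm_triangle_ineq)
  also have "\<dots> \<le> real m * (real m + 1) / 2 * q + real (Suc m) * q"
    using Suc norm_first_difference_shift_le[of a q, OF dd, of i "Suc m"] unfolding n(1)[symmetric]
    by simp
  finally show ?case by (simp add: field_simps)
qed simp

lemma norm_discrete_taylor_le:
  fixes a :: "nat \<Rightarrow> 'a::real_normed_vector"
  assumes dd: "\<And>j. norm (a (Suc (Suc j)) - 2 *\<^sub>R a (Suc j) + a j) \<le> q"
  shows "norm (a k - a n - (real k - real n) *\<^sub>R (a (Suc n) - a n))
    \<le> ((real k - real n)\<^sup>2 - (real k - real n)) / 2 * q"
proof (cases "n \<le> k")
  case True
  then obtain m where "k = n + m"
    using le_Suc_ex by blast
  then show ?thesis
    using norm_forward_taylor_le[of a q, OF dd, of n m]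
    by (simp add: power2_eq_square algebra_simps)
next
  case False
  then have "k = n - (n - k)" "n - k \<le> n" "real k - real n = - real (n - k)"
    by auto
  then show ?thesis
    using norm_backward_taylor_le[of a q, OF dd, of "n - k" n]
    by (simp add: power2_eq_square algebra_simps)
qed

lemma norm_minus_discrete_taylor_le:
  fixes x a :: "nat \<Rightarrow> 'a::real_normed_vector"
  assumes close: "\<And>k. norm (x k - a k) \<le> real k * c"
    and dd: "\<And>j. norm (a (Suc (Suc j)) - 2 *\<^sub>R a (Suc j) + a j) \<le> q"
  shows "norm (x k - a n - (real k - real n) *\<^sub>R (a (Suc n) - a n))
    \<le> real k * c + ((real k - real n)\<^sup>2 - (real k - real n)) / 2 * q"
proof -
  have "x k - a n - (real k - real n) *\<^sub>R (a (Suc n) - a n)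
      = (x k - a k) + (a k - a n - (real k - real n) *\<^sub>R (a (Suc n) - a n))"
    by (simp add: algebra_simps)
  then have "norm (x k - a n - (real k - real n) *\<^sub>R (a (Suc n) - a n))
      \<le> norm (x k - a k) + norm (a k - a n - (real k - real n) *\<^sub>R (a (Suc n) - a n))"
    by (metis norm_triangle_ineq)
  also have "\<dots> \<le> real k * c + ((real k - real n)\<^sup>2 - (real k - real n)) / 2 * q"
    by (rule add_mono[OF close norm_discrete_taylor_le[of a q, OF dd]])
  finally show ?thesis .
qed

lemma norm_poisson_average_minus_le:
  fixes x a :: "nat \<Rightarrow> 'a::banach"
  assumes x: "(\<lambda>k. poisson (real n) k *\<^sub>R x k) sums s"
    and close: "\<And>k. norm (x k - a k) \<le> real k * c"
    and dd: "\<And>j. norm (a (Suc (Suc j)) - 2 *\<^sub>R a (Suc j) + a j) \<le> q"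
  shows "norm (s - a n) \<le> real n * (c + q / 2)"
proof -
  define \<mu> where "\<mu> = real n"
  define p where "p = poisson \<mu>"
  define d where "d = a (Suc n) - a n"
  \<comment> \<open>Expand \<open>a k\<close> to second order around \<open>k = n\<close>; the linear term has Poisson mean zero.\<close>
  have "(\<lambda>k. p k *\<^sub>R x k - p k *\<^sub>R a n - ((real k - \<mu>) * p k) *\<^sub>R d) sums (s - 1 *\<^sub>R a n - 0 *\<^sub>R d)"
    using x unfolding p_def \<mu>_def[symmetric]
    by (intro sums_diff sums_scaleR_left poisson_sums poisson_centered_sums)
  then have f_sums: "(\<lambda>k. p k *\<^sub>R (x k - a n - (real k - \<mu>) *\<^sub>R d)) sums (s - a n)"
    by (simp add: algebra_simps)
  define g where "g k = real k * p k * c + ((real k - \<mu>)\<^sup>2 - (real k - \<mu>)) * p k * (q / 2)" for k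
  have g_sums: "g sums (\<mu> * c + \<mu> * (q / 2))"
    unfolding g_def[abs_def] p_def
    by (intro sums_add sums_mult2 poisson_mean_sums poisson_second_moment_sums)
  have "norm (p k *\<^sub>R (x k - a n - (real k - \<mu>) *\<^sub>R d)) \<le> g k" for k
  proof -
    have "p k * norm (x k - a n - (real k - \<mu>) *\<^sub>R d)
        \<le> p k * (real k * c + ((real k - \<mu>)\<^sup>2 - (real k - \<mu>)) / 2 * q)"
      using norm_minus_discrete_taylor_le[OF close dd, of k n]
      by (intro mult_left_mono) (simp_all add: p_def d_def \<mu>_def poisson_nonneg)
    also have "\<dots> = g k"
      by (simp add: g_def field_simps)
    finally show ?thesis
      using poisson_nonneg[of \<mu> k] by (simp add: p_def \<mu>_def)
  qed
  then have "norm (\<Sum>k. p k *\<^sub>R (x k - a n - (real k - \<mu>) *\<^sub>R d)) \<le> (\<Sum>k. g k)"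
    by (rule norm_suminf_le[OF _ sums_summable[OF g_sums]])
  then show ?thesis
    using sums_unique[OF f_sums] sums_unique[OF g_sums] by (simp add: \<mu>_def algebra_simps)
qed

section \<open>Compression of a contraction semigroup by a projection\<close>

locale compression =
  fixes T S :: "real \<Rightarrow> ('a::banach \<Rightarrow>\<^sub>L 'a)"
    and L :: "'a \<Rightarrow> 'a" and D :: "'a set"
    and P :: "'a \<Rightarrow>\<^sub>L 'a" and b :: real
  assumes T: "C0_contraction_semigroup T" and gen: "generator T L D"
    and P_idem: "P o\<^sub>L P = P" and norm_P: "norm P \<le> 1"
    and b1: "\<And>t. t \<ge> 0 \<Longrightarrow> norm (P o\<^sub>L T t o\<^sub>L (id_blinfun - P)) \<le> t * b"
    and b2: "\<And>t. t \<ge> 0 \<Longrightarrow> norm ((id_blinfun - P) o\<^sub>L T t o\<^sub>L P) \<le> t * b"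
    and S: "C0_semigroup S"
    and genS: "generator S (\<lambda>x. P (L (P x))) {x. P x \<in> D}"
begin

abbreviation A :: "'a \<Rightarrow> 'a" where
  "A z \<equiv> P (L (P z))"

definition PD :: "'a set" where
  "PD = {w. P w = w \<and> w \<in> D}"

lemma T_semigroup: "C0_semigroup T"
  using T unfolding C0_contraction_semigroup_def by auto

lemma norm_T_apply_le: "t \<ge> 0 \<Longrightarrow> norm (T t z) \<le> norm z"
  using T unfolding C0_contraction_semigroup_def by (simp add: norm_contraction_apply_le)

lemma norm_P_apply_le: "norm (P z) \<le> norm z"
  by (rule norm_contraction_apply_le[OF norm_P])

lemma P_P [simp]: "P (P z) = P z"
  by (metis P_idem blinfun_apply_blinfun_compose)

lemma b_nonneg: "b \<ge> 0"
  using order_trans[OF norm_ge_zero b1[of 1]] by simp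

lemma PD_in_domain: "w \<in> PD \<Longrightarrow> w \<in> {x. P x \<in> D}"
  by (simp add: PD_def)

lemma norm_P_T_le:
  assumes "P z = 0" "t \<ge> 0"
  shows "norm (P (T t z)) \<le> t * b * norm z"
proof -
  have "P (T t z) = (P o\<^sub>L T t o\<^sub>L (id_blinfun - P)) z"
    using assms by (simp add: blinfun.diff_left)
  also have "norm \<dots> \<le> t * b * norm z"
    using norm_blinfun[of "P o\<^sub>L T t o\<^sub>L (id_blinfun - P)" z] b1[OF assms(2)]
    by (meson mult_right_mono norm_ge_zero order_trans)
  finally show ?thesis .
qed

lemma norm_T_minus_P_T_le:
  assumes "P u = u" "t \<ge> 0"
  shows "norm (T t u - P (T t u)) \<le> t * b * norm u"
proof -
  have "T t u - P (T t u) = ((id_blinfun - P) o\<^sub>L T t o\<^sub>L P) u"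
    using assms by (simp add: blinfun.diff_left)
  also have "norm \<dots> \<le> t * b * norm u"
    using norm_blinfun[of "(id_blinfun - P) o\<^sub>L T t o\<^sub>L P" u] b2[OF assms(2)]
    by (meson mult_right_mono norm_ge_zero order_trans)
  finally show ?thesis .
qed

lemma S_near_P_T:
  assumes u: "u \<in> PD" and e: "e > 0"
  shows "\<forall>\<^sub>F s in at_right 0. norm (S s u - P (T s u)) \<le> e * s"
proof -
  have u': "P u = u" "u \<in> D"
    using u by (auto simp: PD_def)
  have "\<forall>\<^sub>F s in at_right 0. norm (S s u - u - s *\<^sub>R A u) \<le> e / 2 * s"
    by (rule generator_eventually_le[OF genS]) (use u' e in auto)
  moreover have "\<forall>\<^sub>F s in at_right 0. norm (T s u - u - s *\<^sub>R L u) \<le> e / 2 * s"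
    by (rule generator_eventually_le[OF gen u'(2)]) (use e in auto)
  ultimately show ?thesis
  proof eventually_elim
    case (elim s)
    have "S s u - P (T s u) = (S s u - u - s *\<^sub>R A u) - P (T s u - u - s *\<^sub>R L u)"
      using u' by (simp add: blinfun.diff_right blinfun.scaleR_right)
    also have "norm \<dots> \<le> norm (S s u - u - s *\<^sub>R A u) + norm (T s u - u - s *\<^sub>R L u)"
      using norm_triangle_ineq4[of "S s u - u - s *\<^sub>R A u" "P (T s u - u - s *\<^sub>R L u)"]
        norm_P_apply_le[of "T s u - u - s *\<^sub>R L u"] by linarith
    finally show ?case
      using elim by simp
  qed
qed

lemma S_range_P:
  assumes w: "w \<in> PD" and t: "t \<ge> 0"
  shows "P (S t w) = S t w"
proof -
  define f where "f r = S r w - P (S r w)" for r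
  have "norm (f t - f 0) \<le> 0 - 0"
  proof (rule norm_diff_le_by_right_Dini[OF t])
    show "continuous_on {0..t} f"
      unfolding f_def by (intro continuous_intros blinfun.continuous_on[OF continuous_on_const]
          continuous_on_subset[OF C0_semigroup_continuous_on[OF S]]) auto
    fix r e :: real
    assume r: "r \<in> {0..<t}" and e: "e > 0"
    have "S r w \<in> {x. P x \<in> D}"
      using generator_semigroup_invariant(1)[OF S genS] w r by (auto simp: PD_def)
    moreover have "e / 2 > 0"
      using e by simp
    ultimately have "\<forall>\<^sub>F s in at_right 0. norm (S s (S r w) - S r w - s *\<^sub>R A (S r w)) \<le> e / 2 * s"
      by (rule generator_eventually_le[OF genS])
    with eventually_at_right_less
    show "\<forall>\<^sub>F s in at_right 0. norm (f (r + s) - f r) \<le> 0 - 0 + e * s"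
    proof eventually_elim
      case (elim s)
      define E where "E = S s (S r w) - S r w - s *\<^sub>R A (S r w)"
      have "f (r + s) - f r = E - P E"
        unfolding f_def E_def using C0_semigroup_add[OF S, of s r] elim r
        by (simp add: blinfun.diff_right blinfun.scaleR_right add.commute)
      then have "norm (f (r + s) - f r) \<le> norm E + norm E"
        using norm_triangle_ineq4[of E "P E"] norm_P_apply_le[of E] by simp
      with elim show ?case
        by (simp add: E_def)
    qed
  qed simp
  then show ?thesis
    using w C0_semigroup_zero[OF S] by (simp add: f_def PD_def)
qed

lemma S_PD:
  assumes "w \<in> PD" "t \<ge> 0"
  shows "S t w \<in> PD"
proof -
  have "P (S t w) \<in> D"
    using generator_semigroup_invariant(1)[OF S genS, of w t] assms by (simp add: PD_def)
  then show ?thesis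
    using S_range_P[OF assms] by (simp add: PD_def)
qed

lemma norm_S_PD_le:
  assumes w: "w \<in> PD" and t: "t \<ge> 0"
  shows "norm (S t w) \<le> norm w"
proof -
  have "norm (S t w) \<le> norm (S 0 w)"
  proof (rule le_by_right_Dini[OF t, where \<phi> = "\<lambda>r. norm (S r w)"])
    show "continuous_on {0..t} (\<lambda>r. norm (S r w))"
      by (intro continuous_intros continuous_on_subset[OF C0_semigroup_continuous_on[OF S]]) auto
    fix r e :: real
    assume r: "r \<in> {0..<t}" and e: "e > 0"
    have u: "S r w \<in> PD"
      using S_PD[OF w] r by simp
    from S_near_P_T[OF u e] eventually_at_right_less
    show "\<forall>\<^sub>F s in at_right 0. norm (S (r + s) w) \<le> norm (S r w) + e * s"
    proof eventually_elim
      case (elim s)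
      have "norm (S (r + s) w) = norm (S s (S r w))"
        using C0_semigroup_add[OF S, of s r] elim r by (simp add: add.commute)
      also have "\<dots> \<le> norm (P (T s (S r w))) + norm (S s (S r w) - P (T s (S r w)))"
        by (rule norm_triangle_sub)
      also have "\<dots> \<le> norm (S r w) + e * s"
        using norm_P_apply_le[of "T s (S r w)"] norm_T_apply_le[of s "S r w"] elim by linarith
      finally show ?case .
    qed
  qed
  then show ?thesis
    by (simp add: C0_semigroup_zero[OF S])
qed

lemma PD_linear:
  assumes "x \<in> PD" "y \<in> PD"
  shows "a *\<^sub>R x + c *\<^sub>R y \<in> PD" "A (a *\<^sub>R x + c *\<^sub>R y) = a *\<^sub>R A x + c *\<^sub>R A y"
  using generator_linear[OF genS, of x y a c] assms
  by (auto simp: PD_def blinfun.add_right blinfun.scaleR_right)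

lemma A_S: "w \<in> PD \<Longrightarrow> t \<ge> 0 \<Longrightarrow> A (S t w) = S t (A w)"
  using generator_semigroup_invariant(2)[OF S genS] by (simp add: PD_def)

lemma norm_S_P_le:
  assumes s: "s \<ge> 0"
  shows "norm (S s (P z)) \<le> norm z"
proof -
  \<comment> \<open>The averages \<open>v t\<close> lie in the domain of the generator of \<open>S\<close> and converge to \<open>z\<close>.\<close>
  define v where "v t = (1 / t) *\<^sub>R integral {0..t} (\<lambda>r. S r z)" for t
  have v: "(v \<longlongrightarrow> z) (at_right 0)"
    unfolding v_def by (rule semigroup_average_tendsto[OF S])
  have "\<forall>\<^sub>F t in at_right 0. norm (S s (P (v t))) \<le> norm (v t)"
    using eventually_at_right_less
  proof eventually_elim
    case (elim t)
    have "integral {0..t} (\<lambda>r. S r z) \<in> {x. P x \<in> D}"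
      by (rule semigroup_integral_in_domain[OF S genS elim])
    then have "(1 / t) *\<^sub>R integral {0..t} (\<lambda>r. S r z) + 0 *\<^sub>R integral {0..t} (\<lambda>r. S r z)
        \<in> {x. P x \<in> D}"
      by (intro generator_linear(1)[OF genS])
    then have "v t \<in> {x. P x \<in> D}"
      by (simp add: v_def)
    then have "P (v t) \<in> PD"
      by (simp add: PD_def)
    then show ?case
      using norm_S_PD_le[OF _ s] norm_P_apply_le order_trans by blast
  qed
  moreover have "((\<lambda>t. norm (S s (P (v t)))) \<longlongrightarrow> norm (S s (P z))) (at_right 0)"
    by (intro tendsto_norm blinfun.tendsto[OF tendsto_const] v)
  ultimately show ?thesis
    using tendsto_le[OF trivial_limit_at_right_real tendsto_norm[OF v]] by blast
qed

lemma norm_S_compose_P_le: "s \<ge> 0 \<Longrightarrow> norm (S s o\<^sub>L P) \<le> 1"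
  by (rule norm_blinfun_bound) (auto simp: norm_S_P_le)

lemma norm_S_range_P_le: "P v = v \<Longrightarrow> s \<ge> 0 \<Longrightarrow> norm (S s v) \<le> norm v"
  using norm_S_P_le[of s v] by simp

lemma PT_S_near_PT_T:
  assumes u: "u \<in> PD" and e: "e > 0"
  shows "\<forall>\<^sub>F s in at_right 0. \<forall>\<tau>\<ge>0.
    norm (P (T \<tau> (S s u)) - P (T \<tau> (T s u))) \<le> e * s + \<tau> * s * b\<^sup>2 * norm u"
  using S_near_P_T[OF u e] eventually_at_right_less
proof eventually_elim
  case (elim s)
  show ?case
  proof (intro allI impI)
    fix \<tau> :: real
    assume \<tau>: "\<tau> \<ge> 0"
    have "norm (P (T \<tau> (S s u - P (T s u)))) \<le> e * s"
      using norm_P_apply_le[of "T \<tau> (S s u - P (T s u))"]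
        norm_T_apply_le[OF \<tau>, of "S s u - P (T s u)"] elim
      by linarith
    moreover have "norm (P (T \<tau> (T s u - P (T s u)))) \<le> \<tau> * b * norm (T s u - P (T s u))"
      by (rule norm_P_T_le[OF _ \<tau>]) (simp add: blinfun.diff_right)
    moreover have "\<tau> * b * norm (T s u - P (T s u)) \<le> \<tau> * b * (s * b * norm u)"
      using norm_T_minus_P_T_le[of u s] u elim \<tau> b_nonneg
      by (intro mult_left_mono) (auto simp: PD_def)
    moreover have "P (T \<tau> (S s u)) - P (T \<tau> (T s u))
        = P (T \<tau> (S s u - P (T s u))) - P (T \<tau> (T s u - P (T s u)))"
      by (simp add: blinfun.diff_right)
    ultimately show "norm (P (T \<tau> (S s u)) - P (T \<tau> (T s u))) \<le> e * s + \<tau> * s * b\<^sup>2 * norm u"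
      using norm_triangle_ineq4[of "P (T \<tau> (S s u - P (T s u)))" "P (T \<tau> (T s u - P (T s u)))"]
      by (simp add: power2_eq_square mult_ac)
  qed
qed

lemma P_T_S_right_slope:
  assumes w: "w \<in> PD" and r: "0 \<le> r" "r < h" and e: "e > 0"
  shows "\<forall>\<^sub>F s in at_right 0. norm (P (T (h - (r + s)) (S (r + s) w)) - P (T (h - r) (S r w)))
    \<le> (h - r - s) * s * b\<^sup>2 * norm w + e * s"
proof -
  have u: "S r w \<in> PD" "norm (S r w) \<le> norm w"
    using S_PD[OF w] norm_S_PD_le[OF w] r by auto
  have "\<forall>\<^sub>F s in at_right 0. s < h - r"
    using r by (auto simp: eventually_at_right_field intro!: exI[of _ "h - r"])
  with PT_S_near_PT_T[OF u(1) e] eventually_at_right_less show ?thesis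
  proof eventually_elim
    case (elim s)
    have \<tau>: "h - r - s \<ge> 0"
      using elim by simp
    have "P (T (h - (r + s)) (S (r + s) w)) - P (T (h - r) (S r w))
        = P (T (h - r - s) (S s (S r w))) - P (T (h - r - s) (T s (S r w)))"
      using C0_semigroup_add[OF S, of s r w] C0_semigroup_add[OF T_semigroup \<tau>, of s] elim r
      by (simp add: algebra_simps)
    also have "norm \<dots> \<le> e * s + (h - r - s) * s * b\<^sup>2 * norm (S r w)"
      using elim(1) \<tau> by blast
    also have "\<dots> \<le> e * s + (h - r - s) * s * b\<^sup>2 * norm w"
      using \<tau> elim u(2) by (intro add_left_mono mult_left_mono) simp_all
    finally show ?case
      by simp
  qed
qed

lemma norm_P_T_minus_S_le:
  assumes w: "w \<in> PD" and h: "h \<ge> 0"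
  shows "norm (P (T h w) - S h w) \<le> b\<^sup>2 * h\<^sup>2 / 2 * norm w"
proof -
  \<comment> \<open>Duhamel: \<open>f\<close> runs from \<open>P (T h w)\<close> to \<open>S h w\<close>, with slope bounded by that of \<open>g\<close>.\<close>
  define f where "f r = P (T (h - r) (S r w))" for r
  define g where "g r = b\<^sup>2 * norm w * (h * r - r\<^sup>2 / 2)" for r
  have "norm (f h - f 0) \<le> g h - g 0"
  proof (rule norm_diff_le_by_right_Dini[OF h])
    have "continuous_on {0..h} (\<lambda>r. T (h - r) (S r w))"
      using T unfolding C0_contraction_semigroup_def
      by (intro continuous_on_contraction_semigroup_apply[OF T_semigroup] continuous_intros
          continuous_on_subset[OF C0_semigroup_continuous_on[OF S]]) auto
    then show "continuous_on {0..h} f"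
      unfolding f_def by (intro blinfun.continuous_on[OF continuous_on_const])
    show "continuous_on {0..h} g"
      unfolding g_def by (intro continuous_intros) auto
    fix r e :: real
    assume r: "r \<in> {0..<h}" and e: "e > 0"
    have "\<forall>\<^sub>F s in at_right 0. norm (f (r + s) - f r) \<le> (h - r - s) * s * b\<^sup>2 * norm w + e * s"
      unfolding f_def using r by (intro P_T_S_right_slope[OF w _ _ e]) auto
    then show "\<forall>\<^sub>F s in at_right 0. norm (f (r + s) - f r) \<le> g (r + s) - g r + e * s"
    proof eventually_elim
      case (elim s)
      moreover have "g (r + s) - g r = (h - r - s) * s * b\<^sup>2 * norm w + b\<^sup>2 * norm w * s\<^sup>2 / 2"
        by (simp add: g_def power2_eq_square field_simps)
      moreover have "0 \<le> b\<^sup>2 * norm w * s\<^sup>2 / 2"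
        by simp
      ultimately show ?case
        by linarith
    qed
  qed
  moreover have "f h = S h w" "f 0 = P (T h w)"
    using S_range_P[OF w h]
    by (simp_all add: f_def C0_semigroup_zero[OF T_semigroup] C0_semigroup_zero[OF S])
  ultimately show ?thesis
    by (simp add: g_def norm_minus_commute power2_eq_square field_simps)
qed

lemma norm_S_minus_id_le:
  assumes w: "w \<in> PD" and h: "h \<ge> 0"
  shows "norm (S h w - w) \<le> h * norm (A w)"
proof -
  have "norm (S h w - S 0 w) \<le> h * norm (A w) - 0 * norm (A w)"
  proof (rule norm_diff_le_by_right_Dini[OF h])
    show "continuous_on {0..h} (\<lambda>r. S r w)"
      by (rule continuous_on_subset[OF C0_semigroup_continuous_on[OF S]]) auto
    show "continuous_on {0..h} (\<lambda>r. r * norm (A w))"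
      by (intro continuous_intros)
    fix r e :: real
    assume r: "r \<in> {0..<h}" and e: "e > 0"
    have u: "S r w \<in> PD"
      using S_PD[OF w] r by simp
    have A_le: "norm (A (S r w)) \<le> norm (A w)"
      using A_S[OF w] norm_S_range_P_le[of "A w" r] r by simp
    from generator_eventually_le[OF genS PD_in_domain[OF u] e] eventually_at_right_less
    show "\<forall>\<^sub>F s in at_right 0.
        norm (S (r + s) w - S r w) \<le> (r + s) * norm (A w) - r * norm (A w) + e * s"
    proof eventually_elim
      case (elim s)
      have "S (r + s) w - S r w = (S s (S r w) - S r w - s *\<^sub>R A (S r w)) + s *\<^sub>R A (S r w)"
        using C0_semigroup_add[OF S, of s r] elim r by (simp add: add.commute)
      then have "norm (S (r + s) w - S r w) \<le> e * s + s * norm (A (S r w))"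
        using elim norm_triangle_ineq[of "S s (S r w) - S r w - s *\<^sub>R A (S r w)" "s *\<^sub>R A (S r w)"]
        by simp
      also have "\<dots> \<le> e * s + s * norm (A w)"
        using elim A_le by (simp add: mult_left_mono)
      finally show ?case
        by (simp add: algebra_simps)
    qed
  qed
  then show ?thesis
    by (simp add: C0_semigroup_zero[OF S])
qed

lemma norm_S_second_difference_le:
  assumes y: "y \<in> PD" and Ay: "A y \<in> PD" and h: "h \<ge> 0" and t: "t \<ge> 0"
  shows "norm (S (t + h + h) y - 2 *\<^sub>R S (t + h) y + S t y) \<le> h\<^sup>2 * norm (A (A y))"
proof -
  define v where "v = S h y - y"
  have v: "v \<in> PD" "A v = S h (A y) - A y"
    using PD_linear[OF S_PD[OF y h] y, of 1 "-1"] A_S[OF y h] by (simp_all add: v_def)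
  have Av: "A v \<in> PD"
    using PD_linear(1)[OF S_PD[OF Ay h] Ay, of 1 "-1"] by (simp add: v(2))
  have "S (t + h + h) y - 2 *\<^sub>R S (t + h) y + S t y = S t (S h v - v)"
    using C0_semigroup_add[OF S, of t h] C0_semigroup_add[OF S, of "t + h" h] t h
    by (simp add: v_def blinfun.diff_right blinfun.add_right scaleR_2 algebra_simps)
  also have "norm \<dots> \<le> norm (S h v - v)"
    using PD_linear(1)[OF S_PD[OF v(1) h] v(1), of 1 "-1"] t by (intro norm_S_PD_le) simp_all
  also have "\<dots> \<le> h * norm (A v)"
    by (rule norm_S_minus_id_le[OF v(1) h])
  also have "\<dots> \<le> h * (h * norm (A (A y)))"
    unfolding v(2) using norm_S_minus_id_le[OF Ay h] h by (rule mult_left_mono)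
  finally show ?thesis
    by (simp add: power2_eq_square)
qed

lemma norm_PTP_le:
  assumes "t \<ge> 0"
  shows "norm (P o\<^sub>L T t o\<^sub>L P) \<le> 1"
proof (rule norm_blinfun_bound)
  fix z
  have "norm (P (T t (P z))) \<le> norm z"
    using norm_P_apply_le[of "T t (P z)"] norm_T_apply_le[OF assms, of "P z"] norm_P_apply_le[of z]
    by linarith
  then show "norm ((P o\<^sub>L T t o\<^sub>L P) z) \<le> 1 * norm z"
    by simp
qed simp

lemma norm_bpow_PTP_minus_S_le:
  assumes y: "y \<in> PD" and h: "h \<ge> 0"
  shows "norm (bpow (P o\<^sub>L T h o\<^sub>L P) k y - S (real k * h) y) \<le> real k * (b\<^sup>2 * h\<^sup>2 / 2) * norm y"
proof (induction k)
  case (Suc k)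
  define w where "w = S (real k * h) y"
  have w: "w \<in> PD" "norm w \<le> norm y"
    using S_PD[OF y] norm_S_PD_le[OF y] h by (simp_all add: w_def)
  have "bpow (P o\<^sub>L T h o\<^sub>L P) (Suc k) y - S (real (Suc k) * h) y =
      (P o\<^sub>L T h o\<^sub>L P) (bpow (P o\<^sub>L T h o\<^sub>L P) k y - w) + (P (T h w) - S h w)"
    using C0_semigroup_add[OF S h, of "real k * h" y] w(1) h
    by (simp add: bpow_Suc w_def blinfun.diff_right PD_def algebra_simps)
  also have "norm \<dots> \<le> real k * (b\<^sup>2 * h\<^sup>2 / 2) * norm y + b\<^sup>2 * h\<^sup>2 / 2 * norm y"
  proof (rule order_trans[OF norm_triangle_ineq add_mono])
    show "norm ((P o\<^sub>L T h o\<^sub>L P) (bpow (P o\<^sub>L T h o\<^sub>L P) k y - w)) \<le> real k * (b\<^sup>2 * h\<^sup>2 / 2) * norm y"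
      using norm_contraction_apply_le[OF norm_PTP_le[OF h]] Suc.IH unfolding w_def
      by (rule order_trans)
    show "norm (P (T h w) - S h w) \<le> b\<^sup>2 * h\<^sup>2 / 2 * norm y"
      using order_trans[OF norm_P_T_minus_S_le[OF w(1) h] mult_left_mono[OF w(2)]] by simp
  qed
  finally show ?case
    by (simp add: algebra_simps)
qed (simp add: C0_semigroup_zero[OF S])

lemma norm_bexp_minus_S_le:
  assumes n: "n \<ge> 1" and y: "y \<in> PD" and Ay: "A y \<in> PD"
  shows "norm (bexp (real n *\<^sub>R (P o\<^sub>L (T (1 / real n) - id_blinfun) o\<^sub>L P)) y - S 1 y)
    \<le> (b\<^sup>2 * norm y + norm (A (A y))) / (2 * real n)"
proof -
  define h where "h = 1 / real n"
  define Z where "Z = real n *\<^sub>R (P o\<^sub>L (T h - id_blinfun) o\<^sub>L P)"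
  define x where "x k = bpow (P o\<^sub>L T h o\<^sub>L P) k y" for k
  have h: "h \<ge> 0" "real n * h = 1"
    using n by (simp_all add: h_def)
  have "P (x k) = x k" for k
    using y by (cases k) (simp_all add: x_def bpow_Suc PD_def)
  then have "Z (x j) = real n *\<^sub>R (x (Suc j) - x j)" for j
    by (simp add: Z_def x_def bpow_Suc blinfun.diff_left blinfun.diff_right blinfun.scaleR_left)
  then have "(\<lambda>k. poisson (real n) k *\<^sub>R x k) sums bexp Z y"
    using bexp_poisson[where Z = Z and x = x and \<mu> = "real n"] by (simp add: x_def)
  then have "norm (bexp Z y - S (real n * h) y)
      \<le> real n * (b\<^sup>2 * h\<^sup>2 / 2 * norm y + h\<^sup>2 * norm (A (A y)) / 2)"
  proof (rule norm_poisson_average_minus_le[where a = "\<lambda>k. S (real k * h) y"])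
    show "norm (x k - S (real k * h) y) \<le> real k * (b\<^sup>2 * h\<^sup>2 / 2 * norm y)" for k
      using norm_bpow_PTP_minus_S_le[OF y h(1), of k] by (simp add: x_def mult.assoc)
    show "norm (S (real (Suc (Suc j)) * h) y - 2 *\<^sub>R S (real (Suc j) * h) y + S (real j * h) y)
        \<le> h\<^sup>2 * norm (A (A y))" for j
      using norm_S_second_difference_le[OF y Ay h(1), of "real j * h"] h(1)
      by (simp add: algebra_simps)
  qed
  then have "norm (bexp Z y - S 1 y) \<le> real n * (b\<^sup>2 * h\<^sup>2 / 2 * norm y + h\<^sup>2 * norm (A (A y)) / 2)"
    by (simp only: h(2))
  also have "\<dots> = (b\<^sup>2 * norm y + norm (A (A y))) / (2 * real n)"
    using n by (simp add: h_def power2_eq_square field_simps)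
  finally show ?thesis
    by (simp add: Z_def h_def)
qed

lemma bdd_above_norm_S_compose_P: "bdd_above ((\<lambda>s. norm (S s o\<^sub>L P)) ` {0..1})"
  by (rule bdd_aboveI2[of _ _ 1]) (simp add: norm_S_compose_P_le)

lemma norm_P_apply_le_SUP: "norm (P z) \<le> (SUP s\<in>{0..1}. norm (S s o\<^sub>L P)) * norm z"
proof -
  have "norm (P z) = norm ((S 0 o\<^sub>L P) z)"
    by (simp add: C0_semigroup_zero[OF S])
  also have "\<dots> \<le> norm (S 0 o\<^sub>L P) * norm z"
    by (rule norm_blinfun)
  also have "norm (S 0 o\<^sub>L P) \<le> (SUP s\<in>{0..1}. norm (S s o\<^sub>L P))"
    by (rule cSUP_upper[OF _ bdd_above_norm_S_compose_P]) simp
  finally show ?thesis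
    by (simp add: mult_right_mono)
qed

lemma norm_bexp_P_minus_S_P_le:
  assumes n: "n \<ge> 1" and x: "P x \<in> D" "P (L (P x)) \<in> D"
  shows "norm (bexp (real n *\<^sub>R (P o\<^sub>L (T (1 / real n) - id_blinfun) o\<^sub>L P)) (P x) - S 1 (P x))
    \<le> (SUP s\<in>{0..1}. norm (S s o\<^sub>L P)) / (2 * real n) * (b\<^sup>2 * norm x + norm (L (P (L (P x)))))"
proof -
  define K where "K = (SUP s\<in>{0..1}. norm (S s o\<^sub>L P))"
  have "P x \<in> PD" "A (P x) \<in> PD"
    using x by (simp_all add: PD_def)
  from norm_bexp_minus_S_le[OF n this]
  have "norm (bexp (real n *\<^sub>R (P o\<^sub>L (T (1 / real n) - id_blinfun) o\<^sub>L P)) (P x) - S 1 (P x))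
      \<le> (b\<^sup>2 * norm (P x) + norm (P (L (P (L (P x)))))) / (2 * real n)"
    by simp
  also have "\<dots> \<le> (b\<^sup>2 * (K * norm x) + K * norm (L (P (L (P x))))) / (2 * real n)"
    using norm_P_apply_le_SUP[of x] norm_P_apply_le_SUP[of "L (P (L (P x)))"] n
    by (intro divide_right_mono add_mono mult_left_mono) (simp_all add: K_def)
  also have "\<dots> = K / (2 * real n) * (b\<^sup>2 * norm x + norm (L (P (L (P x)))))"
    by (simp add: field_simps)
  finally show ?thesis
    by (simp add: K_def)
qed

end

theorem lemma5p6:
  fixes T S :: "real \<Rightarrow> ('a::banach \<Rightarrow>\<^sub>L 'a)"
    and L :: "'a \<Rightarrow> 'a" and D :: "'a set"
    and M P :: "'a \<Rightarrow>\<^sub>L 'a" and \<delta> b :: real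
  assumes T: "C0_contraction_semigroup T" and gen: "generator T L D"
    and M: "norm M \<le> 1"
    and P: "P o\<^sub>L P = P"
    and \<delta>: "0 < \<delta>" "\<delta> < 1"
    and MP: "\<And>n::nat. n \<ge> 1 \<Longrightarrow> norm (bpow M n - P) \<le> \<delta> ^ n"
    and b: "b \<ge> 0"
    and b1: "\<And>t. t \<ge> 0 \<Longrightarrow> norm (P o\<^sub>L T t o\<^sub>L (id_blinfun - P)) \<le> t * b"
    and b2: "\<And>t. t \<ge> 0 \<Longrightarrow> norm ((id_blinfun - P) o\<^sub>L T t o\<^sub>L P) \<le> t * b"
    and S: "C0_semigroup S"
    and genS: "generator S (\<lambda>x. P (L (P x))) {x. P x \<in> D}"
  shows "bdd_above ((\<lambda>s. norm (S s o\<^sub>L P)) ` {0..1}) \<and>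
    (\<forall>n::nat. \<forall>x. n \<ge> 1 \<longrightarrow> P x \<in> D \<longrightarrow> P (L (P x)) \<in> D \<longrightarrow>
       norm (bexp (real n *\<^sub>R (P o\<^sub>L (T (1 / real n) - id_blinfun) o\<^sub>L P)) (P x) - S 1 (P x))
       \<le> (SUP s\<in>{0..1}. norm (S s o\<^sub>L P)) / (2 * real n)
          * (b\<^sup>2 * norm x + norm (L (P (L (P x))))))"
proof -
  \<comment> \<open>\<open>M\<close> and \<open>\<delta>\<close> serve only to show \<open>norm P \<le> 1\<close>; the hypothesis \<open>b \<ge> 0\<close> follows from \<open>b1\<close>.\<close>
  interpret compression T S L D P b
    using T gen P norm_le_one_of_bpow_close[OF M \<delta> MP] b1 b2 S genS by unfold_locales
  show ?thesis
    using bdd_above_norm_S_compose_P norm_bexp_P_minus_S_P_le by blast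
qed

end
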